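(* For every odd integer $g\geqslant3$, the ideal $J_g^+\subset\mathbb{C}[\alpha,\gamma]$ is generated by $\zeta_g^+$ together with $\gamma J_{g-2}^+$. Moreover, $\gamma^i\zeta^+_{g-2i}\in J_g^+$ for all integers $i\geqslant0$.
   Context: $\zeta_k^+\in\mathbb{C}[\alpha,\gamma]$: $\zeta^+_i=0$ for $i<0$, $\zeta^+_0=1$, $\zeta^+_{k+1}=\alpha\zeta^+_k+16k^2\zeta^+_{k-1}+2k(k-1)\gamma\zeta^+_{k-2}$ for $k$ even and $\zeta^+_{k+1}=\alpha\zeta^+_k+2k(k-1)\gamma\zeta^+_{k-2}$ for $k$ odd ($k\geqslant0$) (the specialization at $\beta=8$ of $\zeta_{k+1}=\alpha\zeta_k+k^2(\beta+(-1)^k8)\zeta_{k-1}+2k(k-1)\gamma\zeta_{k-2}$); $J^+_k=(\zeta^+_k,\zeta^+_{k+1},\zeta^+_{k+2})$. *)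

theory Defs
  imports "HOL-Computational_Algebra.Polynomial"
begin

text \<open>C[alpha,gamma] is modelled as complex poly poly = (C[alpha])[gamma]:
  the outer variable is gamma, the inner one alpha.\<close>
type_synonym cpoly2 = "complex poly poly"

definition var_alpha :: cpoly2 where "var_alpha = [:[:0, 1:]:]"
definition var_gamma :: cpoly2 where "var_gamma = [:0, 1:]"

definition ideal_span :: "'a::comm_ring_1 set \<Rightarrow> 'a set" where
  "ideal_span S = {x. \<exists>A f. finite A \<and> A \<subseteq> S \<and> x = (\<Sum>a\<in>A. f a * a)}"

text \<open>zeta^+_k for k \<ge> 0 (beta = 8 specialisation).
  zeta_{k+1} = alpha zeta_k + [k even] 16 k^2 zeta_{k-1} + 2k(k-1) gamma zeta_{k-2}.\<close>
fun zeta_nat :: "nat \<Rightarrow> cpoly2" where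
  "zeta_nat 0 = 1"
| "zeta_nat (Suc 0) = var_alpha * zeta_nat 0"
| "zeta_nat (Suc (Suc 0)) = var_alpha * zeta_nat 1"
| "zeta_nat (Suc (Suc (Suc n))) =
     var_alpha * zeta_nat (n + 2)
     + (if even (n + 2) then of_nat (16 * (n + 2)^2) * zeta_nat (n + 1) else 0)
     + of_nat (2 * (n + 2) * (n + 1)) * var_gamma * zeta_nat n"

definition zeta_plus :: "int \<Rightarrow> cpoly2" where
  "zeta_plus k = (if k < 0 then 0 else zeta_nat (nat k))"

definition J_plus :: "int \<Rightarrow> cpoly2 set" where
  "J_plus k = ideal_span {zeta_plus k, zeta_plus (k + 1), zeta_plus (k + 2)}"

end

theory Submission
  imports Defs
begin

text \<open>Write \<open>z k\<close> for \<open>\<zeta>\<^sup>+\<^sub>k\<close>. For odd \<open>g \<ge> 3\<close> the recurrence contributes no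
  \<open>\<zeta>\<^sub>k\<^sub>-\<^sub>1\<close> term at step \<open>k = g\<close>, so
  \<open>z(g+1) - \<alpha> z g = 2g(g-1) \<gamma> z(g-2)\<close> and
  \<open>z(g+2) - \<alpha> z(g+1) - 16(g+1)\<^sup>2 z g = 2(g+1)g \<gamma> z(g-1)\<close>.
  The nonzero integer coefficients are units over \<open>\<complex>\<close>, so the generators
  \<open>z(g+1), z(g+2)\<close> of \<open>J\<^sub>g\<close> may be traded for \<open>\<gamma> z(g-2), \<gamma> z(g-1)\<close>; adding the
  redundant \<open>\<gamma> z g\<close> gives \<open>(z g) + \<gamma> J\<^sub>g\<^sub>-\<^sub>2\<close>. In particular \<open>\<gamma> J\<^sub>g\<^sub>-\<^sub>2 \<subseteq> J\<^sub>g\<close>,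
  and induction on \<open>i\<close> yields \<open>\<gamma>\<^sup>i z(g-2i) \<in> J\<^sub>g\<close>, the terms with \<open>g - 2i < 0\<close> being zero.\<close>

context
begin

interpretation ring_module: module "(*) :: 'a::comm_ring_1 \<Rightarrow> 'a \<Rightarrow> 'a"
  by standard (simp_all add: algebra_simps)

text \<open>The interpreted \<open>scale_scale\<close> is \<open>mult.assoc\<close> reversed; as a simp rule it loops.\<close>
declare ring_module.scale_scale [simp del]

private lemma ideal_span_eq_span: "ideal_span S = ring_module.span S"
  unfolding ideal_span_def ring_module.span_explicit by blast

lemma ideal_span_base: "a \<in> S \<Longrightarrow> a \<in> ideal_span S"
  unfolding ideal_span_eq_span by (rule ring_module.span_base)

lemma ideal_span_zero: "0 \<in> ideal_span S"
  unfolding ideal_span_eq_span by (rule ring_module.span_zero)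

lemma ideal_span_add: "x \<in> ideal_span S \<Longrightarrow> y \<in> ideal_span S \<Longrightarrow> x + y \<in> ideal_span S"
  unfolding ideal_span_eq_span by (rule ring_module.span_add)

lemma ideal_span_mult: "x \<in> ideal_span S \<Longrightarrow> c * x \<in> ideal_span S"
  unfolding ideal_span_eq_span by (rule ring_module.span_scale)

lemma ideal_span_mono: "S \<subseteq> T \<Longrightarrow> ideal_span S \<subseteq> ideal_span T"
  unfolding ideal_span_eq_span by (rule ring_module.span_mono)

lemma ideal_span_insert_redundant:
  "x \<in> ideal_span S \<Longrightarrow> ideal_span (insert x S) = ideal_span S"
  unfolding ideal_span_eq_span ring_module.span_eq
  using ring_module.span_superset by blast

lemma ideal_span_insert_unit_eq:
  fixes b u x :: "'a::comm_ring_1"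
  assumes "u dvd 1" and "b - u * x \<in> ideal_span S"
  shows "ideal_span (insert b S) = ideal_span (insert x S)"
proof -
  obtain v where v: "1 = u * v"
    using assms(1) by (rule dvdE)
  have "ring_module.span (insert b S) = ring_module.span (insert (u * x) S)"
    using assms(2) by (simp add: ideal_span_eq_span ring_module.eq_span_insert_eq)
  also have "\<dots> = ring_module.span (insert x S)"
  proof -
    have "u * x \<in> ring_module.span (insert x S)"
      by (intro ring_module.span_scale ring_module.span_base) simp
    moreover have "x \<in> ring_module.span (insert (u * x) S)"
    proof -
      have "v * (u * x) \<in> ring_module.span (insert (u * x) S)"
        by (intro ring_module.span_scale ring_module.span_base) simp
      moreover have "v * (u * x) = x"
        using v by (metis mult.assoc mult.commute mult_1)
      ultimately show ?thesis
        by simp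
    qed
    moreover have "S \<subseteq> ring_module.span (insert y S)" for y
      using ring_module.span_superset by blast
    ultimately show ?thesis
      by (simp add: ring_module.span_eq)
  qed
  finally show ?thesis
    by (simp add: ideal_span_eq_span)
qed

lemma mult_in_ideal_span_image:
  fixes c :: "'a::comm_ring_1"
  assumes "x \<in> ideal_span T"
  shows "c * x \<in> ideal_span ((*) c ` T)"
  using assms unfolding ideal_span_eq_span
proof (induction rule: ring_module.span_induct_alt)
  case base
  then show ?case
    by (simp add: ring_module.span_zero)
next
  case (step d x y)
  have "c * x \<in> ring_module.span ((*) c ` T)"
    by (rule ring_module.span_base[OF imageI[OF step(1)]])
  then have "d * (c * x) + c * y \<in> ring_module.span ((*) c ` T)"
    using step(2) by (rule ring_module.span_add[OF ring_module.span_scale])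
  moreover have "c * (d * x + y) = d * (c * x) + c * y"
    by (simp add: algebra_simps)
  ultimately show ?case
    by simp
qed

lemma ideal_span_insert_image_mult_ideal_span:
  fixes a c :: "'a::comm_ring_1"
  shows "ideal_span (insert a ((*) c ` ideal_span T)) = ideal_span (insert a ((*) c ` T))"
proof -
  have "(*) c ` ideal_span T \<subseteq> ring_module.span (insert a ((*) c ` T))"
    using mult_in_ideal_span_image ring_module.span_mono[OF subset_insertI]
    by (fastforce simp: ideal_span_eq_span)
  moreover have "(*) c ` T \<subseteq> (*) c ` ideal_span T"
    by (simp add: ideal_span_eq_span image_mono ring_module.span_superset)
  ultimately show ?thesis
    unfolding ideal_span_eq_span
    by (auto simp: ring_module.span_eq intro: ring_module.span_base)
qed

end

lemma ideal_span_triangular_eq: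
  fixes a b c u v x y :: "'a::comm_ring_1"
  assumes "u dvd 1" and "v dvd 1"
    and "b - u * x \<in> ideal_span {a}" and "c - v * y \<in> ideal_span {a, b}"
  shows "ideal_span {a, b, c} = ideal_span {a, x, y}"
proof -
  have "ideal_span {a, b, c} = ideal_span (insert c {a, b})"
    by (simp add: insert_commute)
  also have "\<dots> = ideal_span (insert y {a, b})"
    using assms(2,4) by (rule ideal_span_insert_unit_eq)
  also have "\<dots> = ideal_span (insert b {a, y})"
    by (simp add: insert_commute)
  also have "\<dots> = ideal_span (insert x {a, y})"
    using assms(1) ideal_span_mono[of "{a}" "{a, y}"] assms(3)
    by (intro ideal_span_insert_unit_eq) auto
  also have "\<dots> = ideal_span {a, x, y}"
    by (simp add: insert_commute)
  finally show ?thesis .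
qed

lemma of_nat_dvd_one_poly_poly:
  assumes "n \<noteq> 0"
  shows "of_nat n dvd (1 :: 'a::field_char_0 poly poly)"
proof -
  have "[:[:of_nat n:]:] dvd (1 :: 'a poly poly)"
    using assms by (simp only: is_unit_const_poly_iff) (simp add: dvd_field_iff)
  then show ?thesis
    by (simp add: of_nat_poly)
qed

lemma zeta_nat_Suc:
  assumes "k \<ge> 2"
  shows "zeta_nat (Suc k) = var_alpha * zeta_nat k
     + (if even k then of_nat (16 * k\<^sup>2) * zeta_nat (k - 1) else 0)
     + of_nat (2 * k * (k - 1)) * var_gamma * zeta_nat (k - 2)"
proof -
  obtain n where "k = n + 2"
    using assms by (metis le_add_diff_inverse2)
  then show ?thesis
    by (simp add: numeral_2_eq_2)
qed

lemma zeta_plus_of_nat [simp]: "zeta_plus (int k) = zeta_nat k"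
  by (simp add: zeta_plus_def)

lemma J_plus_of_nat: "J_plus (int k) = ideal_span {zeta_nat k, zeta_nat (k + 1), zeta_nat (k + 2)}"
  unfolding J_plus_def by (metis of_nat_add of_nat_1 of_nat_numeral zeta_plus_of_nat)

lemma J_plus_odd_eq:
  assumes "odd m" and "m \<ge> 3"
  shows "J_plus (int m) =
    ideal_span {zeta_nat m, var_gamma * zeta_nat (m - 2), var_gamma * zeta_nat (m - 1)}"
  unfolding J_plus_of_nat
proof (rule ideal_span_triangular_eq)
  let ?z = zeta_nat
  show "of_nat (2 * m * (m - 1)) dvd (1 :: cpoly2)" "of_nat (2 * (m + 1) * m) dvd (1 :: cpoly2)"
    using assms by (intro of_nat_dvd_one_poly_poly; simp)+
  have "?z (m + 1) - of_nat (2 * m * (m - 1)) * (var_gamma * ?z (m - 2)) = var_alpha * ?z m"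
    using zeta_nat_Suc[of m] assms by (simp add: mult.assoc)
  then show "?z (m + 1) - of_nat (2 * m * (m - 1)) * (var_gamma * ?z (m - 2)) \<in> ideal_span {?z m}"
    by (simp add: ideal_span_mult ideal_span_base)
  have "?z (m + 2) - of_nat (2 * (m + 1) * m) * (var_gamma * ?z (m - 1))
      = var_alpha * ?z (m + 1) + of_nat (16 * (m + 1)\<^sup>2) * ?z m"
    using zeta_nat_Suc[of "m + 1"] assms by (simp add: mult.assoc)
  then show "?z (m + 2) - of_nat (2 * (m + 1) * m) * (var_gamma * ?z (m - 1))
      \<in> ideal_span {?z m, ?z (m + 1)}"
    by (simp add: ideal_span_add ideal_span_mult ideal_span_base)
qed

lemma J_plus_odd_eq_insert_gamma_image:
  assumes "odd m" and "m \<ge> 3"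
  shows "J_plus (int m) = ideal_span (insert (zeta_plus (int m)) ((*) var_gamma ` J_plus (int m - 2)))"
proof -
  let ?z = zeta_nat
  have "int m - 2 = int (m - 2)" "m - 2 + 1 = m - 1" "m - 2 + 2 = m"
    using assms by auto
  then have "J_plus (int m - 2) = ideal_span {?z (m - 2), ?z (m - 1), ?z m}"
    by (simp only: J_plus_of_nat)
  then have "ideal_span (insert (zeta_plus (int m)) ((*) var_gamma ` J_plus (int m - 2)))
      = ideal_span (insert (var_gamma * ?z m)
          {?z m, var_gamma * ?z (m - 2), var_gamma * ?z (m - 1)})"
    by (simp add: ideal_span_insert_image_mult_ideal_span insert_commute)
  also have "\<dots> = ideal_span {?z m, var_gamma * ?z (m - 2), var_gamma * ?z (m - 1)}"
    by (intro ideal_span_insert_redundant ideal_span_mult ideal_span_base) simp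
  finally show ?thesis
    using J_plus_odd_eq[OF assms] by simp
qed

lemma gamma_pow_zeta_plus_in_J_plus:
  assumes "odd m"
  shows "var_gamma ^ i * zeta_plus (int m - 2 * int i) \<in> J_plus (int m)"
  using assms
proof (induction i arbitrary: m)
  case 0
  then show ?case
    by (simp add: J_plus_def ideal_span_base)
next
  case (Suc i)
  show ?case
  proof (cases "m \<ge> 3")
    case True
    have "int (m - 2) = int m - 2"
      using True by simp
    moreover have "odd (m - 2)"
      using Suc.prems True by simp
    ultimately have "var_gamma ^ i * zeta_plus (int m - 2 - 2 * int i) \<in> J_plus (int m - 2)"
      using Suc.IH[of "m - 2"] by simp
    moreover have "int m - 2 * int (Suc i) = int m - 2 - 2 * int i"
      by simp
    ultimately have "var_gamma * (var_gamma ^ i * zeta_plus (int m - 2 * int (Suc i)))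
        \<in> (*) var_gamma ` J_plus (int m - 2)"
      by (simp only: imageI)
    then show ?thesis
      using J_plus_odd_eq_insert_gamma_image[OF Suc.prems True]
      by (simp add: ideal_span_base mult.assoc)
  next
    case False
    then have "int m - 2 * int (Suc i) < 0"
      using Suc.prems by presburger
    then show ?thesis
      by (simp add: zeta_plus_def J_plus_def ideal_span_zero)
  qed
qed

theorem lemma5p8:
  fixes g :: int
  assumes "odd g" and "g \<ge> 3"
  shows "J_plus g = ideal_span (insert (zeta_plus g) ((\<lambda>x. var_gamma * x) ` J_plus (g - 2)))
    \<and> (\<forall>i::nat. var_gamma ^ i * zeta_plus (g - 2 * int i) \<in> J_plus g)"
proof -
  obtain m where m: "g = int m" "odd m" "m \<ge> 3"
    using assms by (metis even_of_nat nonneg_int_cases of_nat_le_iff of_nat_numeral order_trans zero_le_numeral)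
  then show ?thesis
    using J_plus_odd_eq_insert_gamma_image gamma_pow_zeta_plus_in_J_plus by auto
qed

end
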